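(* Let $p>1$ and let $f:\mathbb{N}\to\mathbb{R}_{\geq 0}$ be a concave function such that $n\mapsto \frac{f(n)^p}{n}$ is non-decreasing. Let $M=\{m_1,m_2,\dots,m_{2k}\}$ be a finite subset of $\mathbb{N}$ with $m_i<m_{i+1}$ for all $i$ and $m_1\geq 1$. Then \[ \sum_{i=1}^{k} \frac{f(m_{2i})^p}{m_{2i}}\,(m_{2i}-m_{2i-1}) \;\geq\; \left(\tfrac{1}{2}\right)^{3+p} f\Big(\sum_{i=1}^{k} (m_{2i}-m_{2i-1})\Big)^p. \]
   Context: A function $f:\mathbb{N}\to\mathbb{R}_{\geq 0}$ is called concave if $f$ is non-decreasing and for all $m,n\in\mathbb{N}$ with $n\geq m$ one has $f(n+m)-f(n)\leq f(n)-f(n-m)$. *)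

theory Defs
  imports Complex_Main
begin

definition concave_nat :: "(nat \<Rightarrow> real) \<Rightarrow> bool" where
  "concave_nat f \<longleftrightarrow> (\<forall>n. f n \<ge> 0) \<and> mono f \<and>
     (\<forall>m n. m \<le> n \<longrightarrow> f (n + m) - f n \<le> f n - f (n - m))"

end

theory Submission
  imports Defs
begin

text \<open>Let \<open>D\<close> be the total length of the gaps \<open>d\<^sub>i = m\<^sub>2\<^sub>i - m\<^sub>2\<^sub>i\<^sub>-\<^sub>1\<close> and \<open>S\<^sub>j\<close> their partial sums.
  Pick \<open>j\<close> with \<open>D \<le> 2 S\<^sub>j\<close> and \<open>D \<le> 2 (d\<^sub>j + \<dots> + d\<^sub>k)\<close>. Since the gaps are disjoint
  subintervals of \<open>[0, m\<^sub>2\<^sub>i]\<close>, \<open>S\<^sub>j \<le> S\<^sub>i \<le> m\<^sub>2\<^sub>i\<close> for \<open>i \<ge> j\<close>, so by monotonicity of \<open>f(n)\<^sup>p/n\<close>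
  every weight from index \<open>j\<close> on is at least \<open>f(S\<^sub>j)\<^sup>p/S\<^sub>j \<ge> f(S\<^sub>j)\<^sup>p/D\<close>; the tail therefore
  contributes at least \<open>f(S\<^sub>j)\<^sup>p/2\<close>. Concavity gives \<open>f(D) \<le> f(2 S\<^sub>j) \<le> 2 f(S\<^sub>j)\<close>.\<close>

lemma concave_nat_double:
  assumes "concave_nat f"
  shows "f (n + n) \<le> 2 * f n"
proof -
  have "f (n + n) - f n \<le> f n - f (n - n)" and "0 \<le> f 0"
    using assms unfolding concave_nat_def by blast+
  then show ?thesis by simp
qed

lemma concave_nat_le_double:
  assumes "concave_nat f" and "a \<le> 2 * n"
  shows "f a \<le> 2 * f n"
proof -
  have "f a \<le> f (n + n)"
    using assms unfolding concave_nat_def by (simp add: monoD)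
  also have "\<dots> \<le> 2 * f n"
    using assms(1) by (rule concave_nat_double)
  finally show ?thesis .
qed

lemma concave_nat_powr_le_double:
  assumes "concave_nat f" and "a \<le> 2 * n" and "0 \<le> p"
  shows "f a powr p \<le> 2 powr p * f n powr p"
proof -
  have nonneg: "\<And>n. 0 \<le> f n"
    using assms(1) unfolding concave_nat_def by blast
  have "f a powr p \<le> (2 * f n) powr p"
    using concave_nat_le_double[OF assms(1,2)] nonneg assms(3) by (simp add: powr_mono2)
  also have "\<dots> = 2 powr p * f n powr p"
    using nonneg by (simp add: powr_mult)
  finally show ?thesis .
qed

lemma balanced_split_index:
  fixes d :: "nat \<Rightarrow> nat"
  assumes "0 < (\<Sum>i=1..k. d i)"
  obtains j where "1 \<le> j" "j \<le> k"
    "(\<Sum>i=1..k. d i) \<le> 2 * (\<Sum>i=1..j. d i)"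
    "(\<Sum>i=1..k. d i) \<le> 2 * (\<Sum>i=j..k. d i)"
proof -
  define D where "D = (\<Sum>i=1..k. d i)"
  define j where "j = (LEAST j. D \<le> 2 * (\<Sum>i=1..j. d i))"
  have head: "D \<le> 2 * (\<Sum>i=1..j. d i)"
    unfolding j_def by (rule LeastI[of _ k]) (simp add: D_def)
  have "j \<le> k"
    unfolding j_def by (rule Least_le) (simp add: D_def)
  have "j \<noteq> 0"
  proof
    assume "j = 0"
    then show False
      using head assms by (simp add: D_def)
  qed
  then have "\<not> D \<le> 2 * (\<Sum>i=1..j-1. d i)"
    unfolding j_def by (intro not_less_Least) (auto simp: j_def)
  moreover have "D = (\<Sum>i=1..j-1. d i) + (\<Sum>i=j..k. d i)"
  proof -
    have "{1..k} = {1..j-1} \<union> {j..k}"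
      using \<open>j \<noteq> 0\<close> \<open>j \<le> k\<close> by auto
    then show ?thesis
      unfolding D_def by (simp add: sum.union_disjoint)
  qed
  ultimately have "D \<le> 2 * (\<Sum>i=j..k. d i)"
    by linarith
  with head \<open>j \<noteq> 0\<close> \<open>j \<le> k\<close> show thesis
    unfolding D_def by (intro that) simp_all
qed

lemma gap_sum_le:
  fixes m :: "nat \<Rightarrow> nat"
  assumes "\<And>i. 1 \<le> i \<Longrightarrow> i < 2 * k \<Longrightarrow> m i \<le> m (Suc i)" and "i \<le> k"
  shows "(\<Sum>l=1..i. m (2*l) - m (2*l - 1)) \<le> m (2*i)"
  using assms(2)
proof (induction i)
  case 0
  then show ?case by simp
next
  case (Suc i)
  show ?case
  proof (cases "i = 0")
    case False
    have "m (2*i) \<le> m (Suc (2*i))" "m (Suc (2*i)) \<le> m (Suc (Suc (2*i)))"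
      using assms(1) Suc.prems False by simp_all
    with Suc show ?thesis
      by simp
  qed simp
qed

lemma sum_ge_weighted_tail:
  fixes w d :: "nat \<Rightarrow> real"
  assumes "\<And>i. j \<le> i \<Longrightarrow> i \<le> k \<Longrightarrow> c \<le> w i"
    and "\<And>i. 0 \<le> w i" and "\<And>i. 0 \<le> d i" and "1 \<le> j"
  shows "c * (\<Sum>i=j..k. d i) \<le> (\<Sum>i=1..k. w i * d i)"
proof -
  have "c * (\<Sum>i=j..k. d i) \<le> (\<Sum>i=j..k. w i * d i)"
    unfolding sum_distrib_left using assms(1,3) by (intro sum_mono) (simp add: mult_right_mono)
  also have "\<dots> \<le> (\<Sum>i=1..k. w i * d i)"
    using assms(2-4) by (intro sum_mono2) auto
  finally show ?thesis .
qed

lemma gap_weighted_sum_ge: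
  fixes g :: "nat \<Rightarrow> real" and m :: "nat \<Rightarrow> nat"
  defines "d \<equiv> \<lambda>i. m (2*i) - m (2*i - 1)"
  assumes g_mono: "\<And>a b. 1 \<le> a \<Longrightarrow> a \<le> b \<Longrightarrow> g a \<le> g b" and g_nonneg: "\<And>a. 0 \<le> g a"
    and m_mono: "\<And>i. 1 \<le> i \<Longrightarrow> i < 2 * k \<Longrightarrow> m i \<le> m (Suc i)"
    and "1 \<le> j" and head_pos: "1 \<le> (\<Sum>i=1..j. d i)"
  shows "g (\<Sum>i=1..j. d i) * (\<Sum>i=j..k. real (d i)) \<le> (\<Sum>i=1..k. g (m (2*i)) * d i)"
proof (rule sum_ge_weighted_tail)
  fix i assume "j \<le> i" "i \<le> k"
  then have "(\<Sum>l=1..j. d l) \<le> (\<Sum>l=1..i. d l)"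
    by (intro sum_mono2) auto
  also have "\<dots> \<le> m (2*i)"
    unfolding d_def using m_mono \<open>i \<le> k\<close> by (rule gap_sum_le)
  finally show "g (\<Sum>l=1..j. d l) \<le> g (m (2*i))"
    using head_pos by (intro g_mono)
qed (use g_nonneg \<open>1 \<le> j\<close> in auto)

theorem lemma2p2:
  fixes p :: real and f :: "nat \<Rightarrow> real" and m :: "nat \<Rightarrow> nat" and k :: nat
  assumes "p > 1"
    and "concave_nat f"
    and "\<And>a b. 1 \<le> a \<Longrightarrow> a \<le> b \<Longrightarrow> f a powr p / real a \<le> f b powr p / real b"
    and "k \<ge> 1"
    and "\<And>i. 1 \<le> i \<Longrightarrow> i < 2 * k \<Longrightarrow> m i < m (Suc i)"
    and "m 1 \<ge> 1"
  shows "(\<Sum>i=1..k. f (m (2*i)) powr p / real (m (2*i)) * real (m (2*i) - m (2*i - 1)))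
           \<ge> (1/2) powr (3 + p) * f (\<Sum>i=1..k. m (2*i) - m (2*i - 1)) powr p"
proof -
  define d where "d i = m (2*i) - m (2*i - 1)" for i
  define D where "D = (\<Sum>i=1..k. d i)"
  have "0 < d 1"
    using assms(4) assms(5)[of 1] by (simp add: d_def numeral_2_eq_2)
  moreover have "d 1 \<le> D"
    unfolding D_def using assms(4) by (intro member_le_sum) auto
  ultimately have "0 < D"
    by simp
  then obtain j where j: "1 \<le> j" "j \<le> k"
    "D \<le> 2 * (\<Sum>i=1..j. d i)" "D \<le> 2 * (\<Sum>i=j..k. d i)"
    unfolding D_def by (rule balanced_split_index)
  define s where "s = (\<Sum>i=1..j. d i)"
  have s_pos: "1 \<le> s" and s_le_D: "s \<le> D"
    using j \<open>0 < D\<close> by (auto simp: s_def D_def intro: sum_mono2)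
  have "f s powr p / s * (\<Sum>i=j..k. real (d i))
      \<le> (\<Sum>i=1..k. f (m (2*i)) powr p / m (2*i) * d i)"
    using gap_weighted_sum_ge[where g="\<lambda>n. f n powr p / n" and m=m and k=k and j=j]
      assms(3,5) j s_pos
    unfolding s_def d_def by (auto simp: less_imp_le)
  moreover have "f s powr p / 2 \<le> f s powr p / s * (\<Sum>i=j..k. real (d i))"
  proof -
    have "f s powr p / 2 = f s powr p / D * (D / 2)"
      using \<open>0 < D\<close> by simp
    also have "\<dots> \<le> f s powr p / s * (\<Sum>i=j..k. real (d i))"
    proof (rule mult_mono)
      show "f s powr p / D \<le> f s powr p / s"
        using s_pos s_le_D by (intro divide_left_mono) auto
      show "real D / 2 \<le> (\<Sum>i=j..k. real (d i))"
        using j(4) by (simp flip: of_nat_sum)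
    qed simp_all
    finally show ?thesis .
  qed
  moreover have "(1/2) powr (3 + p) * f D powr p \<le> f s powr p / 2"
  proof -
    have "(1/2) powr (3 + p) * f D powr p \<le> (1/2) powr (3 + p) * (2 powr p * f s powr p)"
      using concave_nat_powr_le_double[OF assms(2) j(3)[folded s_def]] assms(1) by simp
    also have "\<dots> = f s powr p / 8"
      by (simp add: powr_add powr_divide)
    also have "\<dots> \<le> f s powr p / 2"
      by simp
    finally show ?thesis .
  qed
  ultimately show ?thesis
    unfolding d_def D_def by linarith
qed

end
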